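(* Let $(f_n)_{n\ge 0}$ be a sequence of positive real numbers (not depending on $a$) and, for $a>0$, let \[ f(a,x)=\sum_{n=0}^{\infty} f_n\frac{(a)_n}{n!}x^n , \] regarded as a formal power series in $x$. Let $b>a>0$ and $\delta>0$, and write \[ \varphi_{a,b,\delta}(x)=f(a+\delta,x)f(b,x)-f(b+\delta,x)f(a,x)=\sum_{m=0}^{\infty}\varphi_m x^m . \] Then $\varphi_0=\varphi_1=0$, and: (i) if the sequence $\{f_n/f_{n-1}\}_{n\ge1}$ is decreasing, then $\varphi_m>0$ for all $m\ge 2$, so that $a\mapsto f(a,x)$ is strictly log-concave for $x>0$; (ii) if the sequence $\{f_n/f_{n-1}\}_{n\ge1}$ is increasing, then $\varphi_m<0$ for all $m\ge 2$, so that $a\mapsto f(a,x)$ is strictly log-convex for $x>0$.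
   Context: $(a)_n=a(a+1)\cdots(a+n-1)=\Gamma(a+n)/\Gamma(a)$ is the Pochhammer symbol, $(a)_0=1$. Power series are understood formally; the log-concavity/log-convexity statements refer to values $x>0$ at which the series converge. *)

theory Defs
  imports "HOL-Analysis.Analysis" "HOL-Computational_Algebra.Formal_Power_Series"
begin

definition hyp_fps :: "(nat \<Rightarrow> real) \<Rightarrow> real \<Rightarrow> real fps" where
  "hyp_fps f a = Abs_fps (\<lambda>n. f n * pochhammer a n / fact n)"

text \<open>The value of the series f(a,x) at a real point x (meaningful where it converges).\<close>
definition hyp_val :: "(nat \<Rightarrow> real) \<Rightarrow> real \<Rightarrow> real \<Rightarrow> real" where
  "hyp_val f a x = (\<Sum>n. f n * pochhammer a n / fact n * x ^ n)"

definition phi_fps :: "(nat \<Rightarrow> real) \<Rightarrow> real \<Rightarrow> real \<Rightarrow> real \<Rightarrow> real fps" where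
  "phi_fps f a b \<delta> = hyp_fps f (a + \<delta>) * hyp_fps f b - hyp_fps f (b + \<delta>) * hyp_fps f a"

definition strictly_concave_on :: "real set \<Rightarrow> (real \<Rightarrow> real) \<Rightarrow> bool" where
  "strictly_concave_on S g \<longleftrightarrow> convex S \<and>
     (\<forall>x\<in>S. \<forall>y\<in>S. \<forall>u. x \<noteq> y \<and> 0 < u \<and> u < 1 \<longrightarrow>
        u * g x + (1 - u) * g y < g (u * x + (1 - u) * y))"

definition strictly_convex_on :: "real set \<Rightarrow> (real \<Rightarrow> real) \<Rightarrow> bool" where
  "strictly_convex_on S g \<longleftrightarrow> convex S \<and>
     (\<forall>x\<in>S. \<forall>y\<in>S. \<forall>u. x \<noteq> y \<and> 0 < u \<and> u < 1 \<longrightarrow>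
        g (u * x + (1 - u) * y) < u * g x + (1 - u) * g y)"

end

theory Submission
  imports Defs
begin

text \<open>With P(c, n) = (c)_n / n!, the Vandermonde identity for (a + \<delta>)_n turns the coefficient
  \<phi>_m into a sum over i + j + l = m of f(i + j) f(l) P(\<delta>, j) times the cross term
  P(a, i) P(b, l) - P(b, i) P(a, l). Symmetrising under i \<leftrightarrow> l makes each summand the product of
  this cross term, which has the sign of l - i because b > a, with f(i + j) f(l) - f(i) f(l + j),
  which has the same sign when f_n / f_(n-1) decreases and the opposite sign when it increases
  (passing to 1 / f_n exchanges the two cases). The summand (0, 1, m - 1) does not vanish, so
  \<phi>_m has a strict sign for m \<ge> 2. At x > 0 this makes the increments
  log f(c + \<delta>, x) - log f(c, x) strictly monotone in c, and a continuous function with strictly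
  decreasing midpoint increments is strictly concave.\<close>

definition poch_coeff :: "real \<Rightarrow> nat \<Rightarrow> real" where
  "poch_coeff c n = pochhammer c n / fact n"

lemma poch_coeff_0 [simp]: "poch_coeff c 0 = 1"
  and poch_coeff_1 [simp]: "poch_coeff c (Suc 0) = c"
  by (simp_all add: poch_coeff_def)

lemma poch_coeff_add: "poch_coeff (c + d) n = (\<Sum>k\<le>n. poch_coeff c k * poch_coeff d (n - k))"
proof -
  have "poch_coeff (c + d) n = (\<Sum>k\<le>n. of_nat (n choose k) * pochhammer c k * pochhammer d (n - k)) / fact n"
    by (simp add: poch_coeff_def pochhammer_binomial_sum)
  also have "\<dots> = (\<Sum>k\<le>n. poch_coeff c k * poch_coeff d (n - k))"
    unfolding sum_divide_distrib
    by (intro sum.cong) (simp_all add: binomial_fact poch_coeff_def)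
  finally show ?thesis .
qed

lemma hyp_fps_nth: "fps_nth (hyp_fps f c) n = f n * poch_coeff c n"
  by (simp add: hyp_fps_def poch_coeff_def)

lemma hyp_fps_add_mult_nth:
  "fps_nth (hyp_fps f (c + d) * hyp_fps f e) m =
     (\<Sum>(i, j, l)\<in>{(i, j, l). i + j + l = m}.
        f (i + j) * f l * poch_coeff c i * poch_coeff d j * poch_coeff e l)"
proof -
  let ?g = "\<lambda>i j. f (i + j) * f (m - (i + j)) * poch_coeff c i * poch_coeff d j
    * poch_coeff e (m - (i + j))"
  have "fps_nth (hyp_fps f (c + d) * hyp_fps f e) m =
      (\<Sum>k\<le>m. f k * poch_coeff (c + d) k * (f (m - k) * poch_coeff e (m - k)))"
    by (simp add: fps_mult_nth atLeast0AtMost hyp_fps_nth)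
  also have "\<dots> = (\<Sum>k\<le>m. \<Sum>i\<le>k. ?g i (k - i))"
    by (intro sum.cong refl)
      (auto simp: poch_coeff_add sum_distrib_left sum_distrib_right mult_ac intro!: sum.cong)
  also have "\<dots> = (\<Sum>(i, j)\<in>{(i, j). i + j \<le> m}. ?g i j)"
    by (rule sum.triangle_reindex_eq [symmetric])
  also have "\<dots> = (\<Sum>(i, j, l)\<in>{(i, j, l). i + j + l = m}.
      f (i + j) * f l * poch_coeff c i * poch_coeff d j * poch_coeff e l)"
    by (rule sum.reindex_bij_witness [where i = "\<lambda>(i, j, l). (i, j)"
          and j = "\<lambda>(i, j). (i, j, m - (i + j))"]) auto
  finally show ?thesis .
qed

lemma phi_fps_nth_symmetric:
  "2 * fps_nth (phi_fps f a b d) m =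
     (\<Sum>(i, j, l)\<in>{(i, j, l). i + j + l = m}. poch_coeff d j
        * (poch_coeff a i * poch_coeff b l - poch_coeff b i * poch_coeff a l)
        * (f (i + j) * f l - f i * f (l + j)))"
proof -
  let ?T = "{(i, j, l). i + j + l = (m::nat)}"
  define H where "H = (\<lambda>(i, j, l). f (i + j) * f l * poch_coeff d j
    * (poch_coeff a i * poch_coeff b l - poch_coeff b i * poch_coeff a l))"
  define swap :: "nat \<times> nat \<times> nat \<Rightarrow> nat \<times> nat \<times> nat" where "swap = (\<lambda>(i, j, l). (l, j, i))"
  have phi: "fps_nth (phi_fps f a b d) m = sum H ?T"
    unfolding phi_fps_def fps_sub_nth hyp_fps_add_mult_nth H_def sum_subtractf [symmetric]
    by (intro sum.cong) (auto simp: algebra_simps)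
  have "sum (H \<circ> swap) ?T = sum H ?T"
    by (rule sum.reindex_bij_witness [where i = swap and j = swap]) (auto simp: swap_def)
  with phi have "2 * fps_nth (phi_fps f a b d) m = (\<Sum>p\<in>?T. H p + H (swap p))"
    by (simp add: sum.distrib)
  also have "\<dots> = (\<Sum>(i, j, l)\<in>?T. poch_coeff d j
        * (poch_coeff a i * poch_coeff b l - poch_coeff b i * poch_coeff a l)
        * (f (i + j) * f l - f i * f (l + j)))"
    by (intro sum.cong) (auto simp: H_def swap_def algebra_simps)
  finally show ?thesis .
qed

lemma phi_fps_nth_0: "fps_nth (phi_fps f a b d) 0 = 0"
  and phi_fps_nth_1: "fps_nth (phi_fps f a b d) 1 = 0"
  by (simp_all add: phi_fps_def fps_mult_nth hyp_fps_nth algebra_simps)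

lemma pochhammer_mono:
  fixes c d :: "'a :: linordered_semidom"
  assumes "0 < c" "c \<le> d"
  shows "pochhammer c n \<le> pochhammer d n"
proof (induction n)
  case (Suc n)
  then show ?case
    using assms by (auto simp: pochhammer_Suc intro!: mult_mono pochhammer_nonneg)
qed simp

lemma pochhammer_strict_mono:
  fixes c d :: "'a :: linordered_semidom"
  assumes "0 < c" "c < d" "n \<noteq> 0"
  shows "pochhammer c n < pochhammer d n"
  using assms(3)
proof (induction n)
  case (Suc n)
  have "pochhammer c n * (c + of_nat n) < pochhammer d n * (d + of_nat n)"
    using assms pochhammer_mono[of c d n]
    by (intro mult_le_less_imp_less) (auto intro: pochhammer_pos)
  then show ?case
    by (simp add: pochhammer_Suc)
qed simp

lemma poch_coeff_nonneg: "0 < c \<Longrightarrow> 0 \<le> poch_coeff c n"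
  by (simp add: poch_coeff_def pochhammer_nonneg)

lemma poch_coeff_cross_le:
  assumes "0 < a" "a \<le> b" "i \<le> l"
  shows "poch_coeff b i * poch_coeff a l \<le> poch_coeff a i * poch_coeff b l"
proof -
  have "pochhammer b i * pochhammer a i * pochhammer (a + of_nat i) (l - i)
      \<le> pochhammer a i * pochhammer b i * pochhammer (b + of_nat i) (l - i)"
    using assms
    by (auto simp: mult.commute
        intro!: mult_left_mono mult_nonneg_nonneg pochhammer_mono pochhammer_nonneg)
  then have "pochhammer b i * pochhammer a l \<le> pochhammer a i * pochhammer b l"
    using assms(3) by (simp add: pochhammer_product[of i l] mult.assoc)
  then show ?thesis
    by (simp add: poch_coeff_def divide_right_mono)
qed

text \<open>For positive f and s = 1: f(p + j) / f(p) is non-increasing in p, and strictly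
  f(1) / f(0) > f(q + 1) / f(q) for q \<ge> 1; for s = -1 the reverse inequalities.\<close>
definition shift_ratio_sign :: "real \<Rightarrow> (nat \<Rightarrow> real) \<Rightarrow> bool" where
  "shift_ratio_sign s f \<longleftrightarrow>
     (\<forall>p q j. p \<le> q \<longrightarrow> 0 \<le> s * (f (p + j) * f q - f p * f (q + j))) \<and>
     (\<forall>q\<ge>1. 0 < s * (f 1 * f q - f 0 * f (Suc q)))"

lemma phi_fps_nth_sign:
  assumes ab: "0 < a" "a < b" and d: "0 < d" and m: "2 \<le> m" and f: "shift_ratio_sign s f"
  shows "0 < s * fps_nth (phi_fps f a b d) m"
proof -
  let ?T = "{(i, j, l). i + j + l = m}"
  let ?t = "\<lambda>(i, j, l). poch_coeff d j
      * (poch_coeff a i * poch_coeff b l - poch_coeff b i * poch_coeff a l)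
      * (s * (f (i + j) * f l - f i * f (l + j)))"
  have cross: "0 \<le> s * (f (i + j) * f l - f i * f (l + j))" if "i \<le> l" for i j l
    using f that unfolding shift_ratio_sign_def by blast
  have "2 * (s * fps_nth (phi_fps f a b d) m) = sum ?t ?T"
    by (simp add: phi_fps_nth_symmetric sum_distrib_left case_prod_unfold algebra_simps)
  also have "0 < sum ?t ?T"
  proof (rule sum_pos2)
    show "finite ?T"
      by (rule finite_subset [of _ "{..m} \<times> {..m} \<times> {..m}"]) auto
    show "(0, 1, m - 1) \<in> ?T"
      using m by simp
    have "pochhammer a (m - 1) < pochhammer b (m - 1)"
      using ab m by (intro pochhammer_strict_mono) auto
    then have "0 < poch_coeff b (m - 1) - poch_coeff a (m - 1)"
      by (simp add: poch_coeff_def divide_strict_right_mono)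
    moreover have "0 < s * (f 1 * f (m - 1) - f 0 * f m)"
      using f [unfolded shift_ratio_sign_def, THEN conjunct2, rule_format, of "m - 1"] m
      by simp
    ultimately show "0 < ?t (0, 1, m - 1)"
      using d m by simp
    show "0 \<le> ?t p" if "p \<in> ?T" for p
    proof -
      obtain i j l where p: "p = (i, j, l)"
        by (cases p) auto
      have "0 \<le> (poch_coeff a i * poch_coeff b l - poch_coeff b i * poch_coeff a l)
          * (s * (f (i + j) * f l - f i * f (l + j)))"
      proof (cases "i \<le> l")
        case True
        then show ?thesis
          using poch_coeff_cross_le [of a b i l] ab cross [of i l j] by simp
      next
        case False
        then show ?thesis
          using poch_coeff_cross_le [of a b l i] ab cross [of l i j]
          by (intro mult_nonpos_nonpos) (simp_all add: algebra_simps)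
      qed
      then show ?thesis
        using p d by (simp add: poch_coeff_nonneg mult.assoc)
    qed
  qed
  finally show ?thesis
    by simp
qed

lemma ratio_strict_antitone:
  fixes f :: "nat \<Rightarrow> real"
  assumes dec: "\<forall>n\<ge>1. f (Suc n) / f n < f n / f (n - 1)" and "p < q"
  shows "f (Suc q) / f q < f (Suc p) / f p"
  using \<open>p < q\<close>
proof (induction q)
  case (Suc q)
  have "f (Suc (Suc q)) / f (Suc q) < f (Suc q) / f q"
    using dec [rule_format, of "Suc q"] by simp
  with Suc show ?case
    by (cases "p = q") auto
qed simp

lemma cross_le_shift:
  fixes f :: "nat \<Rightarrow> real"
  assumes fpos: "\<And>n. 0 < f n"
    and step: "\<And>p q. p \<le> q \<Longrightarrow> f (Suc q) * f p \<le> f (Suc p) * f q"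
    and "p \<le> q"
  shows "f p * f (q + j) \<le> f (p + j) * f q"
proof (induction j)
  case (Suc j)
  have "f (Suc (q + j)) * f (p + j) \<le> f (Suc (p + j)) * f (q + j)"
    using step \<open>p \<le> q\<close> by simp
  with Suc.IH have "(f p * f (q + j)) * (f (Suc (q + j)) * f (p + j))
      \<le> (f (p + j) * f q) * (f (Suc (p + j)) * f (q + j))"
    by (rule mult_mono) (simp_all add: fpos less_imp_le)
  then have "(f p * f (Suc (q + j))) * (f (p + j) * f (q + j))
      \<le> (f (Suc (p + j)) * f q) * (f (p + j) * f (q + j))"
    by (simp add: mult_ac)
  then show ?case
    using fpos by (simp add: mult_le_cancel_right_pos)
qed simp

lemma shift_ratio_sign_if_ratio_decreasing:
  fixes f :: "nat \<Rightarrow> real"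
  assumes fpos: "\<And>n. 0 < f n" and dec: "\<forall>n\<ge>1. f (Suc n) / f n < f n / f (n - 1)"
  shows "shift_ratio_sign 1 f"
proof -
  have cross_less: "f (Suc q) * f p < f (Suc p) * f q" if "p < q" for p q
    using ratio_strict_antitone [OF dec that] fpos [of p] fpos [of q]
    by (simp add: field_simps)
  have cross_le: "f (Suc q) * f p \<le> f (Suc p) * f q" if "p \<le> q" for p q
    using cross_less [of p q] that by (cases "p = q") auto
  have "f p * f (q + j) \<le> f (p + j) * f q" if "p \<le> q" for p q j
    using cross_le_shift [of f, OF fpos cross_le that] .
  moreover have "f 0 * f (Suc q) < f 1 * f q" if "1 \<le> q" for q
    using cross_less [of 0 q] that by (simp add: mult.commute)
  ultimately show ?thesis
    by (simp add: shift_ratio_sign_def)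
qed

lemma shift_ratio_sign_inverse:
  fixes f :: "nat \<Rightarrow> real"
  assumes fpos: "\<And>n. 0 < f n" and inv: "shift_ratio_sign s (\<lambda>n. 1 / f n)"
  shows "shift_ratio_sign (- s) f"
proof -
  have sign_le: "0 \<le> s * (1 / A * (1 / B) - 1 / C * (1 / D)) \<longleftrightarrow> 0 \<le> - s * (A * B - C * D)"
    and sign_less: "0 < s * (1 / A * (1 / B) - 1 / C * (1 / D)) \<longleftrightarrow> 0 < - s * (A * B - C * D)"
    if "0 < A" "0 < B" "0 < C" "0 < D" for A B C D :: real
  proof -
    have "s * (1 / A * (1 / B) - 1 / C * (1 / D)) = - s * (A * B - C * D) / (A * B * C * D)"
      using that by (simp add: field_simps)
    moreover have "0 < A * B * C * D"
      using that by simp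
    ultimately show "0 \<le> s * (1 / A * (1 / B) - 1 / C * (1 / D)) \<longleftrightarrow> 0 \<le> - s * (A * B - C * D)"
      and "0 < s * (1 / A * (1 / B) - 1 / C * (1 / D)) \<longleftrightarrow> 0 < - s * (A * B - C * D)"
      by (simp_all add: divide_le_0_iff divide_less_0_iff)
  qed
  show ?thesis
    unfolding shift_ratio_sign_def
  proof (intro conjI allI impI)
    fix p q j :: nat
    assume "p \<le> q"
    then have "0 \<le> s * (1 / f (p + j) * (1 / f q) - 1 / f p * (1 / f (q + j)))"
      using inv unfolding shift_ratio_sign_def by blast
    then show "0 \<le> - s * (f (p + j) * f q - f p * f (q + j))"
      using sign_le [of "f (p + j)" "f q" "f p" "f (q + j)"] fpos by blast
  next
    fix q :: nat
    assume "1 \<le> q"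
    then have "0 < s * (1 / f 1 * (1 / f q) - 1 / f 0 * (1 / f (Suc q)))"
      using inv unfolding shift_ratio_sign_def by blast
    then show "0 < - s * (f 1 * f q - f 0 * f (Suc q))"
      using sign_less [of "f 1" "f q" "f 0" "f (Suc q)"] fpos by blast
  qed
qed

lemma ratio_decreasing_inverse:
  fixes f :: "nat \<Rightarrow> real"
  assumes fpos: "\<And>n. 0 < f n" and inc: "\<forall>n\<ge>1. f n / f (n - 1) < f (Suc n) / f n"
  shows "\<forall>n\<ge>1. (1 / f (Suc n)) / (1 / f n) < (1 / f n) / (1 / f (n - 1))"
proof (intro allI impI)
  fix n :: nat
  assume "1 \<le> n"
  then have "f n / f (n - 1) < f (Suc n) / f n"
    using inc by blast
  then have "inverse (f (Suc n) / f n) < inverse (f n / f (n - 1))"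
    using fpos by (intro less_imp_inverse_less) (auto intro: divide_pos_pos)
  then show "(1 / f (Suc n)) / (1 / f n) < (1 / f n) / (1 / f (n - 1))"
    by (simp add: field_simps)
qed

lemma fps_mult_sums:
  fixes F G :: "'a :: {real_normed_field, banach} fps"
  assumes "summable (\<lambda>n. norm (fps_nth F n * x ^ n))" "summable (\<lambda>n. norm (fps_nth G n * x ^ n))"
  shows "(\<lambda>n. fps_nth (F * G) n * x ^ n) sums ((\<Sum>n. fps_nth F n * x ^ n) * (\<Sum>n. fps_nth G n * x ^ n))"
proof -
  have "(\<Sum>i\<le>n. fps_nth F i * x ^ i * (fps_nth G (n - i) * x ^ (n - i)))
      = fps_nth (F * G) n * x ^ n" for n
  proof -
    have "x ^ i * x ^ (n - i) = x ^ n" if "i \<le> n" for i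
      using that by (simp flip: power_add)
    then have "(\<Sum>i\<le>n. fps_nth F i * x ^ i * (fps_nth G (n - i) * x ^ (n - i)))
        = (\<Sum>i\<le>n. fps_nth F i * fps_nth G (n - i) * x ^ n)"
      by (intro sum.cong) (simp_all add: mult_ac)
    then show ?thesis
      by (simp add: fps_mult_nth atLeast0AtMost sum_distrib_right)
  qed
  then show ?thesis
    using Cauchy_product_sums [OF assms] by simp
qed

lemma hyp_term_nonneg:
  "(\<And>n. 0 < f n) \<Longrightarrow> 0 < c \<Longrightarrow> 0 \<le> (x::real) \<Longrightarrow> 0 \<le> f n * pochhammer c n / fact n * x ^ n"
  by (simp add: less_imp_le pochhammer_nonneg)

lemma hyp_val_pos:
  assumes "\<And>n. 0 < f n" "0 < c" "0 < x" "summable (\<lambda>n. f n * pochhammer c n / fact n * x ^ n)"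
  shows "0 < hyp_val f c x"
  unfolding hyp_val_def
proof (rule suminf_pos2 [of _ 0])
  show "0 \<le> f n * pochhammer c n / fact n * x ^ n" for n
    using hyp_term_nonneg [of f c x n] assms by simp
qed (use assms in \<open>simp_all add: pochhammer_pos\<close>)

lemma hyp_val_mult_sums:
  assumes fpos: "\<And>n. 0 < f n" and c: "0 < c" "0 < e" and x: "0 \<le> x"
    and sum_c: "summable (\<lambda>n. f n * pochhammer c n / fact n * x ^ n)"
    and sum_e: "summable (\<lambda>n. f n * pochhammer e n / fact n * x ^ n)"
  shows "(\<lambda>n. fps_nth (hyp_fps f c * hyp_fps f e) n * x ^ n) sums (hyp_val f c x * hyp_val f e x)"
proof -
  have "norm (fps_nth (hyp_fps f c') n * x ^ n) = f n * pochhammer c' n / fact n * x ^ n"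
    if "0 < c'" for c' n
    unfolding hyp_fps_def fps_nth_Abs_fps real_norm_def
    using hyp_term_nonneg [of f c' x n] fpos that x by (intro abs_of_nonneg) blast
  then have "summable (\<lambda>n. norm (fps_nth (hyp_fps f c) n * x ^ n))"
    and "summable (\<lambda>n. norm (fps_nth (hyp_fps f e) n * x ^ n))"
    using sum_c sum_e c by simp_all
  from fps_mult_sums [OF this] show ?thesis
    by (simp add: hyp_fps_def hyp_val_def)
qed

lemma phi_val_sign:
  assumes fpos: "\<And>n. 0 < f n" and ab: "0 < a" "a < b" and d: "0 < d" and x: "0 < x"
    and sums: "\<forall>c>0. summable (\<lambda>n. f n * pochhammer c n / fact n * x ^ n)"
    and f: "shift_ratio_sign s f"
  shows "0 < s * (hyp_val f (a + d) x * hyp_val f b x - hyp_val f (b + d) x * hyp_val f a x)"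
proof -
  have "(\<lambda>m. fps_nth (phi_fps f a b d) m * x ^ m) sums
      (hyp_val f (a + d) x * hyp_val f b x - hyp_val f (b + d) x * hyp_val f a x)"
    unfolding phi_fps_def fps_sub_nth left_diff_distrib
    using fpos ab d x sums by (intro sums_diff hyp_val_mult_sums) auto
  then have phi_sums: "(\<lambda>m. s * (fps_nth (phi_fps f a b d) m * x ^ m)) sums
      (s * (hyp_val f (a + d) x * hyp_val f b x - hyp_val f (b + d) x * hyp_val f a x))"
    by (rule sums_mult)
  have pos: "0 < s * (fps_nth (phi_fps f a b d) m * x ^ m)" if "2 \<le> m" for m
    using phi_fps_nth_sign [OF ab d that f] x by (simp add: mult.assoc [symmetric])
  have "0 < (\<Sum>m. s * (fps_nth (phi_fps f a b d) m * x ^ m))"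
  proof (rule suminf_pos2 [of _ 2])
    show "summable (\<lambda>m. s * (fps_nth (phi_fps f a b d) m * x ^ m))"
      using phi_sums by (rule sums_summable)
    show "0 \<le> s * (fps_nth (phi_fps f a b d) m * x ^ m)" for m
      using pos [of m] phi_fps_nth_0 phi_fps_nth_1
      by (cases "2 \<le> m") (auto simp: not_le less_2_cases_iff)
  qed (use pos in simp)
  with phi_sums show ?thesis
    by (simp add: sums_iff)
qed

lemma hyp_val_continuous_on:
  assumes fpos: "\<And>n. 0 < f n" and x: "0 \<le> x"
    and sums: "\<forall>c>0. summable (\<lambda>n. f n * pochhammer c n / fact n * x ^ n)"
  shows "continuous_on {0<..} (\<lambda>c. hyp_val f c x)"
proof -
  have cont_Icc: "continuous_on {u..v} (\<lambda>c. hyp_val f c x)" if "0 < u" for u v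
  proof -
    let ?v = "max u v"
    have "uniform_limit {u..v} (\<lambda>n c. \<Sum>i<n. f i * pochhammer c i / fact i * x ^ i)
        (\<lambda>c. hyp_val f c x) sequentially"
      unfolding hyp_val_def
    proof (rule Weierstrass_m_test)
      show "summable (\<lambda>n. f n * pochhammer ?v n / fact n * x ^ n)"
        using sums that by simp
      show "norm (f n * pochhammer c n / fact n * x ^ n) \<le> f n * pochhammer ?v n / fact n * x ^ n"
        if "c \<in> {u..v}" for n c
      proof -
        have "0 \<le> f n * pochhammer c n / fact n * x ^ n"
          using hyp_term_nonneg [of f c x n] fpos that \<open>0 < u\<close> x by simp
        moreover have "f n * pochhammer c n / fact n * x ^ n \<le> f n * pochhammer ?v n / fact n * x ^ n"
          using fpos [of n] that \<open>0 < u\<close> x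
          by (intro mult_right_mono divide_right_mono mult_left_mono pochhammer_mono) auto
        ultimately show ?thesis
          by simp
      qed
    qed
    then show ?thesis
      by (rule uniform_limit_theorem [rotated]) (simp_all add: always_eventually continuous_intros)
  qed
  show ?thesis
  proof (rule continuous_at_imp_continuous_on, intro ballI)
    fix c :: real
    assume "c \<in> {0<..}"
    then show "isCont (\<lambda>c. hyp_val f c x) c"
      using cont_Icc [of "c / 2" "c + 1"] by (intro continuous_on_interior) auto
  qed
qed

lemma chord_below_if_midpoint_concave:
  fixes G :: "real \<Rightarrow> real"
  assumes I: "convex I" and cont: "continuous_on I G"
    and mid: "\<And>w h. w - h \<in> I \<Longrightarrow> w + h \<in> I \<Longrightarrow> 0 < h \<Longrightarrow> G (w + h) - G w < G w - G (w - h)"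
    and xy: "x \<in> I" "y \<in> I" "x < z" "z < y"
  shows "G x + (z - x) * ((G y - G x) / (y - x)) < G z"
proof (rule ccontr)
  assume not_below: "\<not> ?thesis"
  define k where "k = (G y - G x) / (y - x)"
  define H where "H t = G t - G x - (t - x) * k" for t
  have H_ends: "H x = 0" "H y = 0" and "H z \<le> 0"
    using xy not_below by (auto simp: H_def k_def)
  have "closed_segment x y \<subseteq> I"
    using I xy(1,2) by (simp add: convex_contains_segment)
  then have sub: "{x..y} \<subseteq> I"
    using xy by (simp add: closed_segment_eq_real_ivl)
  then have "continuous_on {x..y} H"
    unfolding H_def using cont by (intro continuous_intros) (auto intro: continuous_on_subset)
  from continuous_attains_inf [OF compact_Icc _ this]
  obtain s where s: "s \<in> {x..y}" "\<And>t. t \<in> {x..y} \<Longrightarrow> H s \<le> H t"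
    using xy by auto
  \<comment> \<open>H vanishes at both ends and is not positive at z, so it attains its minimum inside.\<close>
  obtain w where w: "x < w" "w < y" "\<And>t. t \<in> {x..y} \<Longrightarrow> H w \<le> H t"
  proof (cases "s = x \<or> s = y")
    case True
    then have "H z \<le> H t" if "t \<in> {x..y}" for t
      using s(2) [OF that] H_ends \<open>H z \<le> 0\<close> by auto
    with that xy show ?thesis
      by blast
  next
    case False
    with s show ?thesis
      by (intro that [of s]) auto
  qed
  define h where "h = min (w - x) (y - w)"
  have h: "0 < h" "x \<le> w - h" "w + h \<le> y"
    using w by (auto simp: h_def)
  have "G (w + h) - G w < G w - G (w - h)"
    using sub h w by (intro mid) auto
  moreover have "H w \<le> H (w + h)" "H w \<le> H (w - h)"
    using w(3) h w by auto
  moreover have "H (w + h) + H (w - h) - 2 * H w = G (w + h) + G (w - h) - 2 * G w"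
    by (simp add: H_def algebra_simps)
  ultimately show False
    by linarith
qed

lemma strictly_concave_on_if_midpoint:
  fixes G :: "real \<Rightarrow> real"
  assumes I: "convex I" and cont: "continuous_on I G"
    and mid: "\<And>w h. w - h \<in> I \<Longrightarrow> w + h \<in> I \<Longrightarrow> 0 < h \<Longrightarrow> G (w + h) - G w < G w - G (w - h)"
  shows "strictly_concave_on I G"
  unfolding strictly_concave_on_def
proof (intro conjI I ballI allI impI)
  fix x y u :: real
  assume "x \<in> I" "y \<in> I" "x \<noteq> y \<and> 0 < u \<and> u < 1"
  then show "u * G x + (1 - u) * G y < G (u * x + (1 - u) * y)"
  proof (induction x y arbitrary: u rule: linorder_wlog)
    case (le x y)
    let ?z = "u * x + (1 - u) * y"
    have "x < y"
      using le by simp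
    then have "0 < (1 - u) * (y - x)" "0 < u * (y - x)"
      using le by simp_all
    then have "x < ?z" "?z < y"
      by (simp_all add: algebra_simps)
    then have "G x + (?z - x) * ((G y - G x) / (y - x)) < G ?z"
      by (intro chord_below_if_midpoint_concave [OF I cont mid le(2,3)])
    moreover have "(?z - x) * ((G y - G x) / (y - x)) = (1 - u) * (G y - G x)"
    proof -
      have "?z - x = (1 - u) * (y - x)"
        by (simp add: algebra_simps)
      then show ?thesis
        using \<open>x < y\<close> by simp
    qed
    ultimately show ?case
      by (simp add: algebra_simps)
  next
    case (sym x y)
    from sym.IH [of "1 - u"] sym.prems show ?case
      by (simp add: algebra_simps)
  qed
qed

lemma ln_hyp_val_strictly_concave:
  assumes fpos: "\<And>n. 0 < f n" and x: "0 < x"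
    and sums: "\<forall>c>0. summable (\<lambda>n. f n * pochhammer c n / fact n * x ^ n)"
    and f: "shift_ratio_sign s f"
  shows "strictly_concave_on {0<..} (\<lambda>c. s * ln (hyp_val f c x))"
proof (rule strictly_concave_on_if_midpoint)
  show "convex {0::real<..}"
    by (simp add: convex_real_interval)
  have F_pos: "0 < hyp_val f c x" if "0 < c" for c
    using hyp_val_pos [of f c x] fpos that x sums by simp
  show "continuous_on {0<..} (\<lambda>c. s * ln (hyp_val f c x))"
    using hyp_val_continuous_on [of f x] fpos x sums F_pos
    by (intro continuous_intros) (auto simp: less_imp_le dest: F_pos)
  fix w h :: real
  assume wh: "w - h \<in> {0<..}" "w + h \<in> {0<..}" "0 < h"
  let ?P = "hyp_val f (w + h) x * hyp_val f (w - h) x"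
  let ?Q = "hyp_val f w x * hyp_val f w x"
  have F_pos_wh: "0 < hyp_val f (w + h) x" "0 < hyp_val f (w - h) x" "0 < hyp_val f w x"
    using wh F_pos by simp_all
  have "0 < s * (?Q - ?P)"
    using phi_val_sign [OF fpos _ _ wh(3) x sums f, of "w - h" w] wh by (simp add: mult.commute)
  moreover have "0 < ?P" "0 < ?Q"
    using F_pos_wh by simp_all
  ultimately have "s * (ln ?P - ln ?Q) < 0"
    by (auto simp: zero_less_mult_iff mult_pos_neg mult_neg_pos)
  moreover have "ln ?P = ln (hyp_val f (w + h) x) + ln (hyp_val f (w - h) x)"
    and "ln ?Q = 2 * ln (hyp_val f w x)"
    using F_pos_wh by (simp_all add: ln_mult)
  ultimately show "s * ln (hyp_val f (w + h) x) - s * ln (hyp_val f w x)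
      < s * ln (hyp_val f w x) - s * ln (hyp_val f (w - h) x)"
    by (simp add: algebra_simps)
qed

theorem theorem1:
  fixes f :: "nat \<Rightarrow> real" and a b \<delta> :: real
  assumes fpos: "\<And>n. f n > 0"
    and ab: "0 < a" "a < b" and dpos: "0 < \<delta>"
  shows "fps_nth (phi_fps f a b \<delta>) 0 = 0 \<and> fps_nth (phi_fps f a b \<delta>) 1 = 0
    \<and> ((\<forall>n\<ge>1. f (Suc n) / f n < f n / f (n - 1)) \<longrightarrow>
          (\<forall>m\<ge>2. fps_nth (phi_fps f a b \<delta>) m > 0)
          \<and> (\<forall>x>0. (\<forall>c>0. summable (\<lambda>n. f n * pochhammer c n / fact n * x ^ n)) \<longrightarrow>
                 strictly_concave_on {0<..} (\<lambda>c. ln (hyp_val f c x))))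
    \<and> ((\<forall>n\<ge>1. f (Suc n) / f n > f n / f (n - 1)) \<longrightarrow>
          (\<forall>m\<ge>2. fps_nth (phi_fps f a b \<delta>) m < 0)
          \<and> (\<forall>x>0. (\<forall>c>0. summable (\<lambda>n. f n * pochhammer c n / fact n * x ^ n)) \<longrightarrow>
                 strictly_convex_on {0<..} (\<lambda>c. ln (hyp_val f c x))))"
proof -
  have sign_consequences:
    "(\<forall>m\<ge>2. 0 < s * fps_nth (phi_fps f a b \<delta>) m)
      \<and> (\<forall>x>0. (\<forall>c>0. summable (\<lambda>n. f n * pochhammer c n / fact n * x ^ n)) \<longrightarrow>
            strictly_concave_on {0<..} (\<lambda>c. s * ln (hyp_val f c x)))"
    if "shift_ratio_sign s f" for s
    using phi_fps_nth_sign [OF ab dpos _ that] ln_hyp_val_strictly_concave [OF fpos _ _ that]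
    by blast
  have concave_neg_iff: "strictly_concave_on S (\<lambda>c. - g c) \<longleftrightarrow> strictly_convex_on S g"
    for S g
    by (auto simp: strictly_concave_on_def strictly_convex_on_def algebra_simps)
  have "shift_ratio_sign 1 f" if "\<forall>n\<ge>1. f (Suc n) / f n < f n / f (n - 1)"
    using that by (rule shift_ratio_sign_if_ratio_decreasing [OF fpos])
  moreover have "shift_ratio_sign (- 1) f" if "\<forall>n\<ge>1. f (Suc n) / f n > f n / f (n - 1)"
  proof (rule shift_ratio_sign_inverse [OF fpos])
    show "shift_ratio_sign 1 (\<lambda>n. 1 / f n)"
      using fpos that by (intro shift_ratio_sign_if_ratio_decreasing ratio_decreasing_inverse) simp_all
  qed
  ultimately show ?thesis
    using sign_consequences [of 1] sign_consequences [of "- 1"] phi_fps_nth_0 phi_fps_nth_1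
    by (simp add: concave_neg_iff)
qed

end
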